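(* Let $K$ be a valued field with value group $\Gamma$, let $L$ be an immediate valued field extension of $K$, let $a\in L\setminus K$, and let $(a_\rho)$ be a pseudocauchy sequence in $K$ of transcendental type over $K$ with $a_\rho\leadsto a$. Put $\gamma_\rho=v(a-a_\rho)$. Let $R(X)\in K(X)\setminus K$. Then there is an index $\rho_0$ such that for $\rho>\rho_0$: (1) $R(a_\rho)$ is defined and lies in $K$; (2) $R(a_\rho)\leadsto R(a)$; (3) there are $\alpha\in\Gamma$ and $i\ge1$ such that eventually $v(R(a_\rho)-R(a))=\alpha+i\gamma_\rho$; (4) with $\alpha,i$ as in (3), $(\alpha+i\gamma_\rho)$ is eventually cofinal in $v(R(a)-K)$; (5) $(R(a_\rho))$ is a divergent pseudocauchy sequence in $K$; (6) with $\alpha,i$ as in (3), $v(R(a)-K)=(\alpha+i\,v(a-K))^{\downarrow}$.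
   Context: For a valued field $K$ with valuation $v:K\to\Gamma\cup\{\infty\}$, write $f\prec g$ iff $vf>vg$. A well-indexed sequence is one indexed by an infinite well-ordered set without greatest element. A well-indexed sequence $(a_\rho)$ pseudoconverges to $a$ (written $a_\rho\leadsto a$) if for some $\rho_0$, $a-a_\sigma\prec a-a_\rho$ whenever $\sigma>\rho>\rho_0$. $(a_\rho)$ is a pseudocauchy sequence if for some $\rho_0$, $a_\tau-a_\sigma\prec a_\sigma-a_\rho$ whenever $\tau>\sigma>\rho>\rho_0$; it is divergent in $K$ if it has no pseudolimit in $K$; it is of transcendental type over $K$ if for every nonconstant $P\in K[X]$, $v(P(a_\rho))$ is eventually constant. An immediate extension has the same value group and residue field. For $b\in L$, $v(b-K)=\{v(b-c):c\in K\}$; for $A\subseteq\Gamma$, $A^{\downarrow}=\{\delta\in\Gamma:\delta\le\sigma\text{ for some }\sigma\in A\}$, and $\alpha+iA=\{\alpha+i\sigma:\sigma\in A\}$. *)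

theory Defs
  imports "HOL-Computational_Algebra.Polynomial"
begin

text \<open>A Krull valuation on the field 'l (the big field L), written additively.
  The value of 0 is \<infinity>; we represent it by never looking at v 0.\<close>

definition valuation :: "('l::field \<Rightarrow> 'g::linordered_ab_group_add) \<Rightarrow> bool" where
  "valuation v \<longleftrightarrow>
     (\<forall>x y. x \<noteq> 0 \<and> y \<noteq> 0 \<longrightarrow> v (x * y) = v x + v y) \<and>
     (\<forall>x y. x \<noteq> 0 \<and> y \<noteq> 0 \<and> x + y \<noteq> 0 \<longrightarrow> min (v x) (v y) \<le> v (x + y))"

definition subfield :: "'l::field set \<Rightarrow> bool" where
  "subfield K \<longleftrightarrow> 0 \<in> K \<and> 1 \<in> K \<and>
     (\<forall>x\<in>K. \<forall>y\<in>K. x + y \<in> K \<and> x * y \<in> K) \<and>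
     (\<forall>x\<in>K. - x \<in> K \<and> inverse x \<in> K)"

definition value_group :: "('l::field \<Rightarrow> 'g) \<Rightarrow> 'l set \<Rightarrow> 'g set" where
  "value_group v K = v ` (K - {0})"

text \<open>L (= UNIV) is an immediate extension of K: same value group, and the
  residue field of K (embedded in that of L) is all of the residue field of L.\<close>
definition immediate_ext :: "('l::field \<Rightarrow> 'g::linordered_ab_group_add) \<Rightarrow> 'l set \<Rightarrow> bool" where
  "immediate_ext v K \<longleftrightarrow>
     value_group v K = value_group v UNIV \<and>
     (\<forall>x. x \<noteq> 0 \<and> 0 \<le> v x \<longrightarrow> (\<exists>y\<in>K. x - y = 0 \<or> 0 < v (x - y)))"

text \<open>f \<prec> g iff v f > v g (with v 0 = \<infinity>).\<close>
definition vprec :: "('l::field \<Rightarrow> 'g::linordered_ab_group_add) \<Rightarrow> 'l \<Rightarrow> 'l \<Rightarrow> bool" where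
  "vprec v f g \<longleftrightarrow> g \<noteq> 0 \<and> (f = 0 \<or> v g < v f)"

definition vext :: "('l::field \<Rightarrow> 'g) \<Rightarrow> 'l \<Rightarrow> 'g option" where
  "vext v x = (if x = 0 then None else Some (v x))"

text \<open>Well-indexed sequences are functions on a wellorder type 'i without
  greatest element (which is then automatically infinite).\<close>
definition no_greatest :: "'i::wellorder itself \<Rightarrow> bool" where
  "no_greatest _ \<longleftrightarrow> (\<forall>\<rho>::'i. \<exists>\<sigma>. \<rho> < \<sigma>)"

definition pseudoconverges ::
  "('l::field \<Rightarrow> 'g::linordered_ab_group_add) \<Rightarrow> ('i::wellorder \<Rightarrow> 'l) \<Rightarrow> 'l \<Rightarrow> bool" where
  "pseudoconverges v s a \<longleftrightarrow>
     (\<exists>\<rho>0. \<forall>\<rho> \<sigma>. \<rho>0 < \<rho> \<and> \<rho> < \<sigma> \<longrightarrow> vprec v (a - s \<sigma>) (a - s \<rho>))"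

definition pseudocauchy ::
  "('l::field \<Rightarrow> 'g::linordered_ab_group_add) \<Rightarrow> ('i::wellorder \<Rightarrow> 'l) \<Rightarrow> bool" where
  "pseudocauchy v s \<longleftrightarrow>
     (\<exists>\<rho>0. \<forall>\<rho> \<sigma> \<tau>. \<rho>0 < \<rho> \<and> \<rho> < \<sigma> \<and> \<sigma> < \<tau> \<longrightarrow>
        vprec v (s \<tau> - s \<sigma>) (s \<sigma> - s \<rho>))"

definition divergent_in ::
  "('l::field \<Rightarrow> 'g::linordered_ab_group_add) \<Rightarrow> 'l set \<Rightarrow> ('i::wellorder \<Rightarrow> 'l) \<Rightarrow> bool" where
  "divergent_in v K s \<longleftrightarrow> \<not> (\<exists>b\<in>K. pseudoconverges v s b)"

definition poly_over :: "'l::field set \<Rightarrow> 'l poly \<Rightarrow> bool" where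
  "poly_over K P \<longleftrightarrow> (\<forall>n. coeff P n \<in> K)"

definition transcendental_type ::
  "('l::field \<Rightarrow> 'g::linordered_ab_group_add) \<Rightarrow> 'l set \<Rightarrow> ('i::wellorder \<Rightarrow> 'l) \<Rightarrow> bool" where
  "transcendental_type v K s \<longleftrightarrow>
     (\<forall>P. poly_over K P \<and> degree P > 0 \<longrightarrow>
        (\<exists>\<rho>0 c. \<forall>\<rho>. \<rho>0 < \<rho> \<longrightarrow> vext v (poly P (s \<rho>)) = c))"

text \<open>v(b - K) = {v(b - c) : c \<in> K}; only used for b \<notin> K, where all values are finite.\<close>
definition vdist_set :: "('l::field \<Rightarrow> 'g) \<Rightarrow> 'l \<Rightarrow> 'l set \<Rightarrow> 'g set" where
  "vdist_set v b K = {v (b - c) | c. c \<in> K \<and> b - c \<noteq> 0}"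

definition downclosure :: "'g::linorder set \<Rightarrow> 'g set \<Rightarrow> 'g set" where
  "downclosure \<Gamma> A = {\<delta> \<in> \<Gamma>. \<exists>\<sigma>\<in>A. \<delta> \<le> \<sigma>}"

definition nsmul :: "nat \<Rightarrow> 'g::ab_group_add \<Rightarrow> 'g" where
  "nsmul i g = (\<Sum>j<i. g)"

definition rat_eval :: "'l::field poly \<Rightarrow> 'l poly \<Rightarrow> 'l \<Rightarrow> 'l" where
  "rat_eval P Q x = poly P x / poly Q x"

end

theory Submission
  imports Defs
begin

text \<open>
  Since a is a pseudolimit of (a_\<rho>) outside K, the gaps \<gamma>_\<rho> = v(a - a_\<rho>) are eventually strictly
  increasing. Expanding a polynomial S around a, S(a_\<rho>) - S(a) = \<Sum>_j c_j (a_\<rho> - a)^j with j \<ge> 1, and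
  since \<gamma>_\<rho> increases, of any two terms one eventually has the strictly smaller value
  v(c_j) + j\<gamma>_\<rho>, so one term dominates: v(S(a_\<rho>) - S(a)) = \<beta> + i\<gamma>_\<rho> eventually, with i \<ge> 1. Together with the transcendental
  type this shows that S(a) \<noteq> 0 and that v(S(a_\<rho>)) is eventually constant for every nonzero S over K.
  For S = Q(a)P - P(a)Q we have R(a_\<rho>) - R(a) = S(a_\<rho>) / (Q(a_\<rho>)Q(a)), which gives (3), and (2)
  and (5) follow because these values increase. If R(a_\<rho>) pseudoconverged to some c \<in> K, then
  c - R(a_\<rho>) = (cQ - P)(a_\<rho>) / Q(a_\<rho>) would have eventually constant value; so (R(a_\<rho>)) diverges.
  A divergent sequence whose distances to b have increasing values gets arbitrarily close to b
  compared with any element of K, which gives (4), and applied to (a_\<rho>) and to (R(a_\<rho>)) also (6).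
\<close>

section \<open>Eventually strictly monotone functions on well-indexed sets\<close>

lemma nsmul_0 [simp]: "nsmul 0 x = 0"
  by (simp add: nsmul_def)

lemma nsmul_Suc: "nsmul (Suc n) x = x + nsmul n x"
  by (simp add: nsmul_def add.commute)

lemma nsmul_add: "nsmul (m + n) x = nsmul m x + nsmul n x"
  by (induction m) (simp_all add: nsmul_Suc add.assoc)

lemma nsmul_mono: "x \<le> y \<Longrightarrow> nsmul n x \<le> nsmul n (y::'g::ordered_ab_group_add)"
  by (induction n) (simp_all add: nsmul_Suc add_mono)

lemma nsmul_strict_mono:
  "x < y \<Longrightarrow> 1 \<le> n \<Longrightarrow> nsmul n x < nsmul n (y::'g::linordered_ab_group_add)"
  by (cases n) (auto simp: nsmul_Suc intro!: add_less_le_mono nsmul_mono)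

lemma add_self_eq_0_imp_eq_0:
  fixes x :: "'g::linordered_ab_group_add"
  assumes "x + x = 0" shows "x = 0"
  using assms add_neg_neg[of x x] add_pos_pos[of x x] by (cases x "0::'g" rule: linorder_cases) auto

lemma eventually_at_top_strict:
  assumes "no_greatest TYPE('i::wellorder)"
  shows "eventually P (at_top :: 'i filter) \<longleftrightarrow> (\<exists>\<rho>0. \<forall>\<rho>>\<rho>0. P \<rho>)"
proof
  assume "eventually P at_top"
  then show "\<exists>\<rho>0. \<forall>\<rho>>\<rho>0. P \<rho>"
    unfolding eventually_at_top_linorder by (meson less_imp_le)
next
  assume "\<exists>\<rho>0. \<forall>\<rho>>\<rho>0. P \<rho>"
  then obtain \<rho>0 where P: "\<forall>\<rho>>\<rho>0. P \<rho>" ..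
  obtain N where "\<rho>0 < N"
    using assms unfolding no_greatest_def by blast
  with P show "eventually P at_top"
    unfolding eventually_at_top_linorder by (meson less_le_trans)
qed

lemma frequently_at_top_strict:
  assumes "no_greatest TYPE('i::wellorder)"
  shows "frequently P (at_top :: 'i filter) \<longleftrightarrow> (\<forall>\<rho>0. \<exists>\<rho>>\<rho>0. P \<rho>)"
  using eventually_at_top_strict[OF assms, of "\<lambda>\<rho>. \<not> P \<rho>"] unfolding frequently_def by auto

lemma eventually_greater_at_top:
  "no_greatest TYPE('i::wellorder) \<Longrightarrow> eventually (\<lambda>\<rho>. \<rho>0 < \<rho>) (at_top :: 'i filter)"
  by (auto simp: eventually_at_top_strict)

lemma eventually_at_top_two_points:
  assumes "no_greatest TYPE('i::wellorder)" and "eventually P (at_top :: 'i filter)"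
  obtains \<rho> \<sigma> where "\<rho> < \<sigma>" "P \<rho>" "P \<sigma>"
proof -
  obtain \<rho>0 where P: "\<forall>\<rho>>\<rho>0. P \<rho>"
    using assms by (auto simp: eventually_at_top_strict)
  obtain \<rho> \<sigma> where "\<rho>0 < \<rho>" "\<rho> < \<sigma>"
    using assms(1) unfolding no_greatest_def by blast
  with P show ?thesis
    using that by (meson less_trans)
qed

definition eventually_strict_mono :: "('i::linorder \<Rightarrow> 'a::linorder) \<Rightarrow> bool" where
  "eventually_strict_mono f \<longleftrightarrow> (\<exists>\<rho>0. strict_mono_on {\<rho>0<..} f)"

lemma eventually_strict_mono_cong:
  assumes "eventually_strict_mono f" and "eventually (\<lambda>\<rho>. f \<rho> = h \<rho>) at_top"
  shows "eventually_strict_mono h"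
proof -
  obtain \<rho>0 where mono: "strict_mono_on {\<rho>0<..} f"
    using assms(1) unfolding eventually_strict_mono_def by blast
  obtain N where eq: "\<forall>\<rho>\<ge>N. f \<rho> = h \<rho>"
    using assms(2) unfolding eventually_at_top_linorder by blast
  have "strict_mono_on {max \<rho>0 N<..} h"
    by (rule strict_mono_onI) (use mono eq in \<open>auto dest: strict_mono_onD\<close>)
  then show ?thesis
    unfolding eventually_strict_mono_def by blast
qed

lemma eventually_strict_mono_affine:
  fixes g :: "'i::linorder \<Rightarrow> 'g::linordered_ab_group_add"
  assumes "eventually_strict_mono g" and "1 \<le> i"
  shows "eventually_strict_mono (\<lambda>\<rho>. \<beta> + nsmul i (g \<rho>))"
  using assms nsmul_strict_mono[OF _ assms(2)]
  unfolding eventually_strict_mono_def strict_mono_on_def by (metis add_strict_left_mono)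

lemma eventually_strict_mono_not_const:
  assumes ng: "no_greatest TYPE('i::wellorder)" and f: "eventually_strict_mono (f :: 'i \<Rightarrow> 'a::linorder)"
  shows "\<not> eventually (\<lambda>\<rho>. f \<rho> = c) at_top"
proof
  assume const: "eventually (\<lambda>\<rho>. f \<rho> = c) at_top"
  obtain \<rho>0 where mono: "strict_mono_on {\<rho>0<..} f"
    using f unfolding eventually_strict_mono_def by blast
  have "eventually (\<lambda>\<rho>. \<rho>0 < \<rho> \<and> f \<rho> = c) at_top"
    using eventually_greater_at_top[OF ng] const by (rule eventually_conj)
  then obtain \<rho> \<sigma> where "\<rho> < \<sigma>" "\<rho>0 < \<rho> \<and> f \<rho> = c" "\<rho>0 < \<sigma> \<and> f \<sigma> = c"
    by (rule eventually_at_top_two_points[OF ng])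
  with strict_mono_onD[OF mono, of \<rho> \<sigma>] show False
    by simp
qed

lemma eventually_strict_mono_dichotomy:
  assumes ng: "no_greatest TYPE('i::wellorder)" and h: "eventually_strict_mono (h :: 'i \<Rightarrow> 'a::linorder)"
  shows "eventually (\<lambda>\<rho>. c < h \<rho>) at_top \<or> eventually (\<lambda>\<rho>. h \<rho> < c) at_top"
proof -
  obtain \<rho>0 where mono: "strict_mono_on {\<rho>0<..} h"
    using h unfolding eventually_strict_mono_def by blast
  show ?thesis
  proof (cases "\<exists>\<rho>>\<rho>0. c < h \<rho>")
    case True
    then obtain \<rho> where \<rho>: "\<rho>0 < \<rho>" "c < h \<rho>" by blast
    have "c < h \<sigma>" if "\<rho> < \<sigma>" for \<sigma>
      using strict_mono_onD[OF mono, of \<rho> \<sigma>] \<rho> that less_trans[OF \<rho>(1) that] by simp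
    then show ?thesis
      by (auto simp: eventually_at_top_strict[OF ng])
  next
    case False
    have "h \<sigma> < c" if "\<rho>0 < \<sigma>" for \<sigma>
    proof -
      obtain \<tau> where "\<sigma> < \<tau>"
        using ng unfolding no_greatest_def by blast
      moreover from this that False have "h \<tau> \<le> c"
        by (meson leI less_trans)
      ultimately show ?thesis
        using strict_mono_onD[OF mono, of \<sigma> \<tau>] that by (meson greaterThan_iff less_le_trans less_trans)
    qed
    then show ?thesis
      by (auto simp: eventually_at_top_strict[OF ng])
  qed
qed

lemma eventually_strict_mono_compare_multiples:
  fixes g :: "'i::wellorder \<Rightarrow> 'g::linordered_ab_group_add"
  assumes ng: "no_greatest TYPE('i)" and g: "eventually_strict_mono g" and "i \<noteq> k"
  shows "eventually (\<lambda>\<rho>. A + nsmul i (g \<rho>) < B + nsmul k (g \<rho>)) at_top \<or>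
         eventually (\<lambda>\<rho>. B + nsmul k (g \<rho>) < A + nsmul i (g \<rho>)) at_top"
proof -
  have less: "eventually (\<lambda>\<rho>. A + nsmul i (g \<rho>) < B + nsmul k (g \<rho>)) at_top \<or>
         eventually (\<lambda>\<rho>. B + nsmul k (g \<rho>) < A + nsmul i (g \<rho>)) at_top"
    if "i < k" for A B i k
  proof -
    have k: "k = (k - i) + i" using that by simp
    have "eventually_strict_mono (\<lambda>\<rho>. B + nsmul (k - i) (g \<rho>))"
      using that by (intro eventually_strict_mono_affine g) simp
    from eventually_strict_mono_dichotomy[OF ng this, of A] show ?thesis
      by (subst (1 2) k, unfold nsmul_add) (simp add: add.assoc [symmetric])
  qed
  show ?thesis
    using \<open>i \<noteq> k\<close> less[of i k A B] less[of k i B A] by (cases "i < k") auto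
qed

section \<open>Sequences with increasing values\<close>

definition val_increasing :: "('l::field \<Rightarrow> 'g::linorder) \<Rightarrow> ('i::linorder \<Rightarrow> 'l) \<Rightarrow> bool" where
  "val_increasing v x \<longleftrightarrow>
     eventually (\<lambda>\<rho>. x \<rho> \<noteq> 0) at_top \<and> eventually_strict_mono (\<lambda>\<rho>. v (x \<rho>))"

lemma val_increasing_cong:
  assumes "val_increasing v x" and "eventually (\<lambda>\<rho>. y \<rho> \<noteq> 0 \<and> v (y \<rho>) = v (x \<rho>)) at_top"
  shows "val_increasing v y"
proof -
  have "eventually (\<lambda>\<rho>. v (x \<rho>) = v (y \<rho>)) at_top"
    using assms(2) by eventually_elim simp
  with assms show ?thesis
    unfolding val_increasing_def by (auto elim: eventually_mono intro: eventually_strict_mono_cong)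
qed

lemma val_increasing_affine:
  fixes v :: "'l::field \<Rightarrow> 'g::linordered_ab_group_add"
  assumes "eventually_strict_mono g" and "1 \<le> i"
    and "eventually (\<lambda>\<rho>. x \<rho> \<noteq> 0 \<and> v (x \<rho>) = \<beta> + nsmul i (g \<rho>)) at_top"
  shows "val_increasing v x"
proof -
  have "eventually (\<lambda>\<rho>. \<beta> + nsmul i (g \<rho>) = v (x \<rho>)) at_top"
    using assms(3) by eventually_elim simp
  then have "eventually_strict_mono (\<lambda>\<rho>. v (x \<rho>))"
    by (rule eventually_strict_mono_cong[OF eventually_strict_mono_affine[OF assms(1,2)]])
  with assms(3) show ?thesis
    unfolding val_increasing_def by (auto elim: eventually_mono)
qed

lemma val_increasing_if_pseudoconverges:
  assumes ng: "no_greatest TYPE('i::wellorder)" and "pseudoconverges v (y :: 'i \<Rightarrow> 'l::field) c"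
  shows "val_increasing v (\<lambda>\<rho>. c - y \<rho>)"
proof -
  obtain \<rho>0 where prec: "\<And>\<rho> \<sigma>. \<rho>0 < \<rho> \<Longrightarrow> \<rho> < \<sigma> \<Longrightarrow> vprec v (c - y \<sigma>) (c - y \<rho>)"
    using assms(2) unfolding pseudoconverges_def by blast
  have nonzero: "c - y \<rho> \<noteq> 0" if "\<rho>0 < \<rho>" for \<rho>
  proof -
    obtain \<sigma> where "\<rho> < \<sigma>"
      using ng unfolding no_greatest_def by blast
    with prec[OF that] show ?thesis
      unfolding vprec_def by blast
  qed
  have "strict_mono_on {\<rho>0<..} (\<lambda>\<rho>. v (c - y \<rho>))"
    by (rule strict_mono_onI) (use prec nonzero in \<open>auto simp: vprec_def\<close>)
  with nonzero show ?thesis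
    unfolding val_increasing_def eventually_strict_mono_def eventually_at_top_strict[OF ng] by blast
qed

lemma subfield_diff: "subfield K \<Longrightarrow> x \<in> K \<Longrightarrow> y \<in> K \<Longrightarrow> x - y \<in> K"
  unfolding subfield_def by (metis diff_conv_add_uminus)

lemma subfield_mult: "subfield K \<Longrightarrow> x \<in> K \<Longrightarrow> y \<in> K \<Longrightarrow> x * y \<in> K"
  unfolding subfield_def by blast

lemma subfield_divide: "subfield K \<Longrightarrow> x \<in> K \<Longrightarrow> y \<in> K \<Longrightarrow> x / y \<in> K"
  unfolding subfield_def by (metis divide_inverse)

lemma poly_in_subfield:
  assumes "subfield K" and "poly_over K p" and "x \<in> K"
  shows "poly p x \<in> K"
  using assms(2)
proof (induction p rule: pCons_induct)
  case 0
  with assms(1) show ?case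
    unfolding subfield_def by simp
next
  case (pCons c p)
  then have "c \<in> K" "poly_over K p"
    unfolding poly_over_def by (metis coeff_pCons_0, metis coeff_pCons_Suc)
  with pCons.IH assms(1,3) show ?case
    unfolding subfield_def by simp
qed

text \<open>This holds even where q vanishes, since division by zero yields 0.\<close>

lemma rat_eval_in_subfield:
  "subfield K \<Longrightarrow> poly_over K p \<Longrightarrow> poly_over K q \<Longrightarrow> x \<in> K \<Longrightarrow> rat_eval p q x \<in> K"
  unfolding rat_eval_def by (intro subfield_divide poly_in_subfield)

lemma degree_pos_if_root:
  fixes p :: "'a::comm_ring_1 poly"
  assumes "p \<noteq> 0" and "poly p x = 0"
  shows "0 < degree p"
proof (rule ccontr)
  assume "\<not> 0 < degree p"
  then obtain c where "p = [:c:]"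
    by (auto elim: degree_eq_zeroE)
  with assms show False
    by simp
qed

lemma poly_diff_eq_sum:
  fixes p :: "'a::idom poly" and b :: 'a
  defines "T \<equiv> p \<circ>\<^sub>p [:b, 1:]"
  shows "poly p x - poly p b = (\<Sum>j\<in>{j \<in> {1..degree p}. coeff T j \<noteq> 0}. coeff T j * (x - b) ^ j)"
proof -
  let ?f = "\<lambda>j. coeff T j * (x - b) ^ j"
  have deg: "degree T = degree p"
    unfolding T_def by (simp add: degree_pcompose)
  have "poly p b = coeff T 0"
    unfolding T_def by (simp add: poly_0_coeff_0 [symmetric] poly_pcompose)
  moreover have "poly p x = poly T (x - b)"
    unfolding T_def by (simp add: poly_pcompose)
  moreover have "poly T (x - b) = ?f 0 + (\<Sum>j\<in>{1..degree p}. ?f j)"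
    unfolding poly_altdef deg by (simp add: atMost_atLeast0 sum.atLeast_Suc_atMost)
  moreover have "(\<Sum>j\<in>{1..degree p}. ?f j) = (\<Sum>j\<in>{j \<in> {1..degree p}. coeff T j \<noteq> 0}. ?f j)"
    by (rule sum.mono_neutral_right) auto
  ultimately show ?thesis
    by simp
qed

section \<open>Valued fields\<close>

locale valued_field =
  fixes v :: "'l::field \<Rightarrow> 'g::linordered_ab_group_add"
  assumes valuation: "valuation v"
begin

lemma v_mult: "x \<noteq> 0 \<Longrightarrow> y \<noteq> 0 \<Longrightarrow> v (x * y) = v x + v y"
  using valuation by (simp add: valuation_def)

lemma v_one [simp]: "v 1 = 0"
  using v_mult[of 1 1] by simp

lemma v_uminus [simp]: "v (- x) = v x"
proof (cases "x = 0")
  case False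
  have "v (-1) + v (-1) = 0"
    using v_mult[of "-1" "-1"] by simp
  then have "v (-1) = 0"
    by (rule add_self_eq_0_imp_eq_0)
  then show ?thesis
    using v_mult[of "-1" x] False by simp
qed simp

lemma v_minus_commute: "v (x - y) = v (y - x)"
  using v_uminus[of "x - y"] by simp

lemma v_inverse: "x \<noteq> 0 \<Longrightarrow> v (inverse x) = - v x"
  using v_mult[of x "inverse x"] by (simp add: eq_neg_iff_add_eq_0 add.commute)

lemma v_divide: "x \<noteq> 0 \<Longrightarrow> y \<noteq> 0 \<Longrightarrow> v (x / y) = v x - v y"
  by (simp add: divide_inverse v_mult v_inverse)

lemma v_power: "x \<noteq> 0 \<Longrightarrow> v (x ^ n) = nsmul n (v x)"
  by (induction n) (simp_all add: v_mult nsmul_Suc)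

lemma v_add_eq_left:
  assumes "x \<noteq> 0" "y \<noteq> 0" "v x < v y"
  shows "x + y \<noteq> 0 \<and> v (x + y) = v x"
proof
  show sum: "x + y \<noteq> 0"
  proof
    assume "x + y = 0"
    then have "y = - x" by (simp add: eq_neg_iff_add_eq_0 add.commute)
    with assms show False by simp
  qed
  have "min (v x) (v y) \<le> v (x + y)"
    using valuation assms sum unfolding valuation_def by blast
  moreover have "min (v (x + y)) (v (- y)) \<le> v x"
    using valuation assms sum unfolding valuation_def
    by (metis add_diff_cancel diff_conv_add_uminus neg_equal_0_iff_equal)
  ultimately show "v (x + y) = v x"
    using assms by (auto simp: min_def split: if_splits)
qed

lemma v_diff_recenter:
  assumes "y - b \<noteq> 0" "b - c \<noteq> 0" "v (y - b) < v (b - c)"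
  shows "y - c \<noteq> 0 \<and> v (y - c) = v (y - b)"
  using v_add_eq_left[OF assms] by simp

lemma pseudoconverges_if_val_increasing:
  assumes "val_increasing v (\<lambda>\<rho>. y \<rho> - b)"
  shows "pseudoconverges v y b"
proof -
  obtain N \<rho>1 where nz: "\<And>\<rho>. N \<le> \<rho> \<Longrightarrow> y \<rho> - b \<noteq> 0"
    and mono: "strict_mono_on {\<rho>1<..} (\<lambda>\<rho>. v (y \<rho> - b))"
    using assms unfolding val_increasing_def eventually_strict_mono_def eventually_at_top_linorder
    by blast
  show ?thesis
    unfolding pseudoconverges_def vprec_def
  proof (intro exI[of _ "max N \<rho>1"] allI impI)
    fix \<rho> \<sigma> assume "max N \<rho>1 < \<rho> \<and> \<rho> < \<sigma>"
    then have "N \<le> \<rho>" "N \<le> \<sigma>" "\<rho>1 < \<rho>" "\<rho>1 < \<sigma>" "\<rho> < \<sigma>" by auto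
    then show "b - y \<rho> \<noteq> 0 \<and> (b - y \<sigma> = 0 \<or> v (b - y \<rho>) < v (b - y \<sigma>))"
      using nz strict_mono_onD[OF mono, of \<rho> \<sigma>] v_minus_commute[of b "y \<rho>"] v_minus_commute[of b "y \<sigma>"]
      by auto
  qed
qed

lemma pseudocauchy_if_val_increasing:
  assumes "val_increasing v (\<lambda>\<rho>. y \<rho> - b)"
  shows "pseudocauchy v y"
proof -
  obtain N \<rho>1 where nz: "\<And>\<rho>. N \<le> \<rho> \<Longrightarrow> y \<rho> - b \<noteq> 0"
    and mono: "strict_mono_on {\<rho>1<..} (\<lambda>\<rho>. v (y \<rho> - b))"
    using assms unfolding val_increasing_def eventually_strict_mono_def eventually_at_top_linorder
    by blast
  have step: "y \<sigma> - y \<rho> \<noteq> 0 \<and> v (y \<sigma> - y \<rho>) = v (y \<rho> - b)"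
    if "max N \<rho>1 < \<rho>" "\<rho> < \<sigma>" for \<rho> \<sigma>
  proof -
    have "\<rho>1 < \<rho>" "\<rho>1 < \<sigma>" "N \<le> \<rho>" "N \<le> \<sigma>"
      using that by auto
    then have "b - y \<rho> \<noteq> 0" "y \<sigma> - b \<noteq> 0" "v (b - y \<rho>) < v (y \<sigma> - b)"
      using nz strict_mono_onD[OF mono, of \<rho> \<sigma>] \<open>\<rho> < \<sigma>\<close> v_minus_commute[of b "y \<rho>"]
      by auto
    then have "(b - y \<rho>) + (y \<sigma> - b) \<noteq> 0 \<and> v ((b - y \<rho>) + (y \<sigma> - b)) = v (b - y \<rho>)"
      by (rule v_add_eq_left)
    then show ?thesis
      by (simp add: v_minus_commute[of b])
  qed
  show ?thesis
    unfolding pseudocauchy_def vprec_def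
  proof (intro exI[of _ "max N \<rho>1"] allI impI)
    fix \<rho> \<sigma> \<tau> assume h: "max N \<rho>1 < \<rho> \<and> \<rho> < \<sigma> \<and> \<sigma> < \<tau>"
    then have "max N \<rho>1 < \<sigma>"
      using less_trans by blast
    with h step[of \<rho> \<sigma>] step[of \<sigma> \<tau>] strict_mono_onD[OF mono, of \<rho> \<sigma>]
    show "y \<sigma> - y \<rho> \<noteq> 0 \<and> (y \<tau> - y \<sigma> = 0 \<or> v (y \<sigma> - y \<rho>) < v (y \<tau> - y \<sigma>))"
      by auto
  qed
qed

lemma eventually_dominant_term:
  fixes e :: "'i::wellorder \<Rightarrow> 'l"
  assumes ng: "no_greatest TYPE('i)" and e: "val_increasing v e"
    and "finite J" "J \<noteq> {}" "\<forall>j\<in>J. c j \<noteq> 0"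
  shows "\<exists>i\<in>J. eventually (\<lambda>\<rho>. (\<Sum>j\<in>J. c j * e \<rho> ^ j) \<noteq> 0 \<and>
                   v (\<Sum>j\<in>J. c j * e \<rho> ^ j) = v (c i) + nsmul i (v (e \<rho>))) at_top"
proof -
  have "eventually (\<lambda>\<rho>. e \<rho> \<noteq> 0) at_top"
    using e unfolding val_increasing_def by blast
  then have monomial_value: "eventually (\<lambda>\<rho>. c k * e \<rho> ^ k \<noteq> 0 \<and>
      v (c k * e \<rho> ^ k) = v (c k) + nsmul k (v (e \<rho>))) at_top" if "c k \<noteq> 0" for k
    using that by (auto elim!: eventually_mono simp: v_mult v_power)
  show ?thesis
    using assms(3-5)
  proof (induction J rule: finite_ne_induct)
    case (singleton k)
    then show ?case
      using monomial_value[of k] by simp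
  next
    case (insert k J)
    let ?S = "\<lambda>\<rho>. \<Sum>j\<in>J. c j * e \<rho> ^ j" and ?t = "\<lambda>\<rho>. c k * e \<rho> ^ k"
    obtain i where "i \<in> J" and sum: "eventually (\<lambda>\<rho>. ?S \<rho> \<noteq> 0 \<and>
        v (?S \<rho>) = v (c i) + nsmul i (v (e \<rho>))) at_top"
      using insert by auto
    have monomial: "eventually (\<lambda>\<rho>. ?t \<rho> \<noteq> 0 \<and> v (?t \<rho>) = v (c k) + nsmul k (v (e \<rho>))) at_top"
      using monomial_value insert.prems by simp
    have split: "(\<Sum>j\<in>insert k J. c j * e \<rho> ^ j) = ?S \<rho> + ?t \<rho>" for \<rho>
      using insert.hyps by (simp add: add.commute)
    have "i \<noteq> k"
      using \<open>i \<in> J\<close> insert.hyps by blast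
    with ng e consider
        (sum_dominates) "eventually (\<lambda>\<rho>. v (c i) + nsmul i (v (e \<rho>)) < v (c k) + nsmul k (v (e \<rho>))) at_top"
      | (term_dominates) "eventually (\<lambda>\<rho>. v (c k) + nsmul k (v (e \<rho>)) < v (c i) + nsmul i (v (e \<rho>))) at_top"
      unfolding val_increasing_def using eventually_strict_mono_compare_multiples by blast
    then show ?case
    proof cases
      case sum_dominates
      from sum monomial this have "eventually (\<lambda>\<rho>. ?S \<rho> + ?t \<rho> \<noteq> 0 \<and>
          v (?S \<rho> + ?t \<rho>) = v (c i) + nsmul i (v (e \<rho>))) at_top"
        by eventually_elim (use v_add_eq_left in auto)
      with \<open>i \<in> J\<close> show ?thesis
        unfolding split by blast
    next
      case term_dominates
      from sum monomial this have "eventually (\<lambda>\<rho>. ?S \<rho> + ?t \<rho> \<noteq> 0 \<and>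
          v (?S \<rho> + ?t \<rho>) = v (c k) + nsmul k (v (e \<rho>))) at_top"
        by eventually_elim (use v_add_eq_left[of "?t _" "?S _"] in \<open>auto simp: add.commute\<close>)
      then show ?thesis
        unfolding split by blast
    qed
  qed
qed

lemma eventually_poly_diff_value:
  fixes x :: "'i::wellorder \<Rightarrow> 'l"
  assumes ng: "no_greatest TYPE('i)" and x: "val_increasing v (\<lambda>\<rho>. x \<rho> - b)"
    and "0 < degree p"
  obtains \<beta> i where "1 \<le> i"
    "eventually (\<lambda>\<rho>. poly p (x \<rho>) - poly p b \<noteq> 0 \<and>
       v (poly p (x \<rho>) - poly p b) = \<beta> + nsmul i (v (x \<rho> - b))) at_top"
proof -
  define T where "T = p \<circ>\<^sub>p [:b, 1:]"
  define J where "J = {j \<in> {1..degree p}. coeff T j \<noteq> 0}"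
  have "degree T = degree p"
    unfolding T_def by (simp add: degree_pcompose)
  with \<open>0 < degree p\<close> have "coeff T (degree p) \<noteq> 0"
    by (metis degree_0 leading_coeff_0_iff less_irrefl)
  with \<open>0 < degree p\<close> have "degree p \<in> J"
    unfolding J_def by simp
  then have J: "finite J" "J \<noteq> {}" "\<forall>j\<in>J. coeff T j \<noteq> 0" "\<forall>j\<in>J. 1 \<le> j"
    unfolding J_def by auto
  obtain i where "i \<in> J" and dominant: "eventually (\<lambda>\<rho>. (\<Sum>j\<in>J. coeff T j * (x \<rho> - b) ^ j) \<noteq> 0 \<and>
      v (\<Sum>j\<in>J. coeff T j * (x \<rho> - b) ^ j) = v (coeff T i) + nsmul i (v (x \<rho> - b))) at_top"
    using eventually_dominant_term[OF ng x J(1-3)] by blast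
  have expand: "poly p (x \<rho>) - poly p b = (\<Sum>j\<in>J. coeff T j * (x \<rho> - b) ^ j)" for \<rho>
    unfolding J_def T_def by (rule poly_diff_eq_sum)
  show ?thesis
  proof (rule that)
    show "1 \<le> i"
      using \<open>i \<in> J\<close> J by auto
    show "eventually (\<lambda>\<rho>. poly p (x \<rho>) - poly p b \<noteq> 0 \<and>
       v (poly p (x \<rho>) - poly p b) = v (coeff T i) + nsmul i (v (x \<rho> - b))) at_top"
      unfolding expand by (rule dominant)
  qed
qed

lemma frequently_val_ge_if_divergent:
  fixes y :: "'i::wellorder \<Rightarrow> 'l"
  assumes "divergent_in v K y" and y: "val_increasing v (\<lambda>\<rho>. y \<rho> - b)"
    and "c \<in> K" and "b - c \<noteq> 0"
  shows "\<exists>\<^sub>F \<rho> in at_top. v (b - c) \<le> v (y \<rho> - b)"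
proof (rule ccontr)
  assume "\<not> ?thesis"
  then have "eventually (\<lambda>\<rho>. v (y \<rho> - b) < v (b - c)) at_top"
    by (simp add: not_frequently not_le)
  moreover have "eventually (\<lambda>\<rho>. y \<rho> - b \<noteq> 0) at_top"
    using y unfolding val_increasing_def by blast
  ultimately have "eventually (\<lambda>\<rho>. y \<rho> - c \<noteq> 0 \<and> v (y \<rho> - c) = v (y \<rho> - b)) at_top"
    by eventually_elim (use v_diff_recenter \<open>b - c \<noteq> 0\<close> in blast)
  then have "val_increasing v (\<lambda>\<rho>. y \<rho> - c)"
    by (rule val_increasing_cong[OF y])
  then have "pseudoconverges v y c"
    by (rule pseudoconverges_if_val_increasing)
  with assms(1,3) show False
    unfolding divergent_in_def by blast
qed

lemma vdist_set_downward_closed: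
  assumes "subfield K" and "\<delta> \<in> value_group v K" and "\<delta> \<le> v (b - c)" and "c \<in> K" and "b - c \<noteq> 0"
  shows "\<delta> \<in> vdist_set v b K"
proof (cases "\<delta> = v (b - c)")
  case True
  with assms(4,5) show ?thesis
    unfolding vdist_set_def by blast
next
  case False
  with assms(3) have less: "\<delta> < v (b - c)" by simp
  obtain e where e: "e \<in> K" "e \<noteq> 0" "\<delta> = v e"
    using assms(2) unfolding value_group_def by blast
  have "- e + (b - c) \<noteq> 0 \<and> v (- e + (b - c)) = v (- e)"
    using v_add_eq_left[of "- e" "b - c"] e less assms(5) by simp
  moreover have "c + e \<in> K"
    using assms(1) \<open>c \<in> K\<close> e(1) unfolding subfield_def by blast
  moreover have "- e + (b - c) = b - (c + e)"
    by simp
  ultimately show ?thesis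
    unfolding vdist_set_def using e(3) by (metis (mono_tags, lifting) mem_Collect_eq v_uminus)
qed

lemma offset_in_value_group:
  assumes "x \<noteq> 0" and "e \<noteq> 0" and "v x = \<alpha> + nsmul i (v e)"
  shows "\<alpha> \<in> value_group v UNIV"
proof -
  have "v (x / e ^ i) = \<alpha>" and "x / e ^ i \<noteq> 0"
    using assms by (simp_all add: v_divide v_power)
  then show ?thesis
    unfolding value_group_def by blast
qed

end

section \<open>Pseudolimits of sequences of transcendental type\<close>

locale pseudolimit = valued_field v for v :: "'l::field \<Rightarrow> 'g::linordered_ab_group_add" +
  fixes K :: "'l set" and s :: "'i::wellorder \<Rightarrow> 'l" and a :: 'l
  assumes subfield: "subfield K"
    and no_greatest: "no_greatest TYPE('i)"
    and s_in_K: "\<And>\<rho>. s \<rho> \<in> K"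
    and a_notin_K: "a \<notin> K"
    and pseudoconverges: "pseudoconverges v s a"
    and transcendental_type: "transcendental_type v K s"
begin

lemma val_increasing_a_minus_s: "val_increasing v (\<lambda>\<rho>. a - s \<rho>)"
  by (rule val_increasing_if_pseudoconverges[OF no_greatest pseudoconverges])

lemma val_increasing_s_minus_a: "val_increasing v (\<lambda>\<rho>. s \<rho> - a)"
proof (rule val_increasing_cong[OF val_increasing_a_minus_s])
  show "eventually (\<lambda>\<rho>. s \<rho> - a \<noteq> 0 \<and> v (s \<rho> - a) = v (a - s \<rho>)) at_top"
    using s_in_K a_notin_K by (auto intro!: always_eventually simp: v_minus_commute[of _ a])
qed

lemma poly_value_eventually_const:
  assumes "poly_over K p" and "p \<noteq> 0"
  shows "poly p a \<noteq> 0 \<and> (\<exists>\<gamma>. eventually (\<lambda>\<rho>. poly p (s \<rho>) \<noteq> 0 \<and> v (poly p (s \<rho>)) = \<gamma>) at_top)"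
proof (cases "degree p = 0")
  case True
  then obtain c where "p = [:c:]"
    by (auto elim: degree_eq_zeroE)
  with \<open>p \<noteq> 0\<close> show ?thesis
    by (auto intro!: exI[of _ "v c"] always_eventually)
next
  case False
  then obtain \<beta> i where "1 \<le> i" and diff: "eventually (\<lambda>\<rho>. poly p (s \<rho>) - poly p a \<noteq> 0 \<and>
      v (poly p (s \<rho>) - poly p a) = \<beta> + nsmul i (v (s \<rho> - a))) at_top"
    using eventually_poly_diff_value[OF no_greatest val_increasing_s_minus_a] by blast
  have "val_increasing v (\<lambda>\<rho>. poly p (s \<rho>) - poly p a)"
    by (rule val_increasing_affine[OF _ \<open>1 \<le> i\<close> diff])
      (use val_increasing_s_minus_a in \<open>simp add: val_increasing_def\<close>)
  then have not_const: "\<not> eventually (\<lambda>\<rho>. v (poly p (s \<rho>) - poly p a) = \<gamma>) at_top" for \<gamma>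
    using eventually_strict_mono_not_const[OF no_greatest] unfolding val_increasing_def by blast
  obtain c where c: "eventually (\<lambda>\<rho>. vext v (poly p (s \<rho>)) = c) at_top"
    using transcendental_type assms(1) False
    unfolding transcendental_type_def eventually_at_top_strict[OF no_greatest] by blast
  have "poly p a \<noteq> 0"
  proof
    assume "poly p a = 0"
    from c diff have "eventually (\<lambda>\<rho>. v (poly p (s \<rho>) - poly p a) = the c) at_top"
      by eventually_elim (use \<open>poly p a = 0\<close> in \<open>auto simp: vext_def\<close>)
    with not_const show False by blast
  qed
  moreover obtain \<gamma> where "c = Some \<gamma>"
  proof (cases c)
    case None
    from c have "eventually (\<lambda>\<rho>. v (poly p (s \<rho>) - poly p a) = v (poly p a)) at_top"
      by eventually_elim (use None in \<open>auto simp: vext_def split: if_splits\<close>)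
    with not_const show ?thesis by blast
  qed
  from c have "eventually (\<lambda>\<rho>. poly p (s \<rho>) \<noteq> 0 \<and> v (poly p (s \<rho>)) = \<gamma>) at_top"
    by eventually_elim (use \<open>c = Some \<gamma>\<close> in \<open>auto simp: vext_def split: if_splits\<close>)
  ultimately show ?thesis
    by blast
qed

lemma rat_eval_divergent:
  assumes "poly_over K p" and "poly_over K q" and "q \<noteq> 0" and "\<nexists>c. p = smult c q"
  shows "divergent_in v K (\<lambda>\<rho>. rat_eval p q (s \<rho>))"
  unfolding divergent_in_def
proof
  assume "\<exists>c\<in>K. pseudoconverges v (\<lambda>\<rho>. rat_eval p q (s \<rho>)) c"
  then obtain c where "c \<in> K" and conv: "pseudoconverges v (\<lambda>\<rho>. rat_eval p q (s \<rho>)) c" ..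
  define u where "u = smult c q - p"
  have "poly_over K u"
    using assms(1,2) \<open>c \<in> K\<close> subfield
    unfolding u_def poly_over_def by (simp add: subfield_diff subfield_mult)
  moreover have "u \<noteq> 0"
    using assms(4) unfolding u_def by auto
  ultimately obtain \<gamma>u where u: "eventually (\<lambda>\<rho>. poly u (s \<rho>) \<noteq> 0 \<and> v (poly u (s \<rho>)) = \<gamma>u) at_top"
    using poly_value_eventually_const by blast
  obtain \<gamma>q where q: "eventually (\<lambda>\<rho>. poly q (s \<rho>) \<noteq> 0 \<and> v (poly q (s \<rho>)) = \<gamma>q) at_top"
    using poly_value_eventually_const[OF assms(2,3)] by blast
  from u q have "eventually (\<lambda>\<rho>. v (c - rat_eval p q (s \<rho>)) = \<gamma>u - \<gamma>q) at_top"
  proof eventually_elim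
    case (elim \<rho>)
    then have "c - rat_eval p q (s \<rho>) = poly u (s \<rho>) / poly q (s \<rho>)"
      unfolding u_def rat_eval_def by (simp add: field_simps)
    with elim show ?case
      by (simp add: v_divide)
  qed
  moreover have "val_increasing v (\<lambda>\<rho>. c - rat_eval p q (s \<rho>))"
    by (rule val_increasing_if_pseudoconverges[OF no_greatest conv])
  ultimately show False
    using eventually_strict_mono_not_const[OF no_greatest] unfolding val_increasing_def by blast
qed

lemma s_divergent: "divergent_in v K s"
proof -
  have "poly_over K [:0, 1:]" "poly_over K 1"
    using subfield unfolding poly_over_def subfield_def by (auto simp: coeff_pCons split: nat.split)
  moreover have "\<nexists>c. [:0, 1:] = smult c (1 :: 'l poly)"
  proof
    assume "\<exists>c. [:0, 1:] = smult c (1 :: 'l poly)"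
    then obtain c where "[:0, 1:] = smult c (1 :: 'l poly)" ..
    then have "coeff [:0, 1:] 1 = coeff (smult c 1) 1"
      by simp
    then show False
      by simp
  qed
  ultimately show ?thesis
    using rat_eval_divergent[of "[:0, 1:]" 1] by (simp add: rat_eval_def)
qed

lemma rat_eval_diff_value:
  assumes "poly_over K p" and "poly_over K q" and "q \<noteq> 0" and "\<nexists>c. p = smult c q"
  obtains \<alpha> i where "1 \<le> i"
    "eventually (\<lambda>\<rho>. rat_eval p q (s \<rho>) - rat_eval p q a \<noteq> 0 \<and>
       v (rat_eval p q (s \<rho>) - rat_eval p q a) = \<alpha> + nsmul i (v (a - s \<rho>))) at_top"
proof -
  obtain \<gamma> where qa: "poly q a \<noteq> 0"
    and q: "eventually (\<lambda>\<rho>. poly q (s \<rho>) \<noteq> 0 \<and> v (poly q (s \<rho>)) = \<gamma>) at_top"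
    using poly_value_eventually_const[OF assms(2,3)] by blast
  define r where "r = smult (poly q a) p - smult (poly p a) q"
  have ra: "poly r a = 0"
    unfolding r_def by simp
  have "r \<noteq> 0"
  proof
    assume "r = 0"
    then have "smult (inverse (poly q a)) (smult (poly q a) p) =
        smult (inverse (poly q a)) (smult (poly p a) q)"
      unfolding r_def by simp
    then have "p = smult (inverse (poly q a) * poly p a) q"
      using qa by simp
    with assms(4) show False by blast
  qed
  then have "0 < degree r"
    using ra by (rule degree_pos_if_root)
  then obtain \<beta> i where "1 \<le> i" and diff: "eventually (\<lambda>\<rho>. poly r (s \<rho>) - poly r a \<noteq> 0 \<and>
      v (poly r (s \<rho>) - poly r a) = \<beta> + nsmul i (v (s \<rho> - a))) at_top"
    using eventually_poly_diff_value[OF no_greatest val_increasing_s_minus_a] by blast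
  have identity: "rat_eval p q x - rat_eval p q a = poly r x / (poly q x * poly q a)"
    if "poly q x \<noteq> 0" for x
    using that qa unfolding rat_eval_def r_def by (simp add: field_simps)
  show ?thesis
  proof (rule that)
    show "1 \<le> i" by fact
    from diff q show "eventually (\<lambda>\<rho>. rat_eval p q (s \<rho>) - rat_eval p q a \<noteq> 0 \<and>
       v (rat_eval p q (s \<rho>) - rat_eval p q a) = (\<beta> - (\<gamma> + v (poly q a))) + nsmul i (v (a - s \<rho>))) at_top"
    proof eventually_elim
      case (elim \<rho>)
      then have "v (rat_eval p q (s \<rho>) - rat_eval p q a) = v (poly r (s \<rho>)) - (\<gamma> + v (poly q a))"
        using qa by (simp add: identity v_divide v_mult ra)
      with elim show ?case
        using qa by (simp add: identity ra v_minus_commute[of a] diff_add_eq)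
    qed
  qed
qed

lemma offset_in_value_group_if_immediate:
  assumes "immediate_ext v K"
    and "eventually (\<lambda>\<rho>. y \<rho> \<noteq> 0 \<and> v (y \<rho>) = \<alpha> + nsmul i (v (a - s \<rho>))) at_top"
  shows "\<alpha> \<in> value_group v K"
proof -
  obtain \<rho> where "y \<rho> \<noteq> 0" and "v (y \<rho>) = \<alpha> + nsmul i (v (a - s \<rho>))"
    using assms(2) unfolding eventually_at_top_linorder by (meson order_refl)
  moreover have "a - s \<rho> \<noteq> 0"
    using s_in_K a_notin_K by auto
  ultimately have "\<alpha> \<in> value_group v UNIV"
    using offset_in_value_group by blast
  with assms(1) show ?thesis
    unfolding immediate_ext_def by simp
qed

lemma eventually_in_vdist_set:
  assumes "\<And>\<rho>. y \<rho> \<in> K"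
    and "eventually (\<lambda>\<rho>. y \<rho> - b \<noteq> 0 \<and> v (y \<rho> - b) = \<alpha> + nsmul i (v (a - s \<rho>))) at_top"
  shows "eventually (\<lambda>\<rho>. \<alpha> + nsmul i (v (a - s \<rho>)) \<in> vdist_set v b K) at_top"
  using assms(2)
proof eventually_elim
  case (elim \<rho>)
  with assms(1) have "\<alpha> + nsmul i (v (a - s \<rho>)) = v (b - y \<rho>) \<and> y \<rho> \<in> K \<and> b - y \<rho> \<noteq> 0"
    by (auto simp: v_minus_commute[of b])
  then show ?case
    unfolding vdist_set_def by blast
qed

lemma vdist_set_cofinal:
  assumes "divergent_in v K y" and "1 \<le> i"
    and y: "eventually (\<lambda>\<rho>. y \<rho> - b \<noteq> 0 \<and> v (y \<rho> - b) = \<alpha> + nsmul i (v (a - s \<rho>))) at_top"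
    and "\<delta> \<in> vdist_set v b K"
  shows "\<exists>\<^sub>F \<rho> in at_top. \<delta> \<le> \<alpha> + nsmul i (v (a - s \<rho>))"
proof -
  obtain c where "c \<in> K" "b - c \<noteq> 0" and "\<delta> = v (b - c)"
    using assms(4) unfolding vdist_set_def by blast
  moreover have "val_increasing v (\<lambda>\<rho>. y \<rho> - b)"
    using val_increasing_affine[OF _ \<open>1 \<le> i\<close> y] val_increasing_a_minus_s
    unfolding val_increasing_def by blast
  ultimately have "\<exists>\<^sub>F \<rho> in at_top. \<delta> \<le> v (y \<rho> - b)"
    using frequently_val_ge_if_divergent[OF assms(1)] by blast
  then show ?thesis
    using y by (rule frequently_eventually_frequently[THEN frequently_elim1]) auto
qed

lemma vdist_set_eq_downclosure:
  assumes imm: "immediate_ext v K" and y_in_K: "\<And>\<rho>. y \<rho> \<in> K"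
    and div: "divergent_in v K y" and "1 \<le> i"
    and y: "eventually (\<lambda>\<rho>. y \<rho> - b \<noteq> 0 \<and> v (y \<rho> - b) = \<alpha> + nsmul i (v (a - s \<rho>))) at_top"
  shows "vdist_set v b K = downclosure (value_group v K) ((\<lambda>\<sigma>. \<alpha> + nsmul i \<sigma>) ` vdist_set v a K)"
proof
  show "vdist_set v b K \<subseteq> downclosure (value_group v K) ((\<lambda>\<sigma>. \<alpha> + nsmul i \<sigma>) ` vdist_set v a K)"
  proof
    fix \<delta> assume \<delta>: "\<delta> \<in> vdist_set v b K"
    then obtain \<rho> where "\<delta> \<le> \<alpha> + nsmul i (v (a - s \<rho>))"
      using vdist_set_cofinal[OF div \<open>1 \<le> i\<close> y] frequently_ex by blast
    moreover have "v (a - s \<rho>) \<in> vdist_set v a K"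
      using s_in_K a_notin_K unfolding vdist_set_def by force
    moreover have "\<delta> \<in> value_group v K"
      using \<delta> imm unfolding immediate_ext_def value_group_def vdist_set_def by auto
    ultimately show "\<delta> \<in> downclosure (value_group v K) ((\<lambda>\<sigma>. \<alpha> + nsmul i \<sigma>) ` vdist_set v a K)"
      unfolding downclosure_def by blast
  qed
  show "downclosure (value_group v K) ((\<lambda>\<sigma>. \<alpha> + nsmul i \<sigma>) ` vdist_set v a K) \<subseteq> vdist_set v b K"
  proof
    fix \<delta> assume "\<delta> \<in> downclosure (value_group v K) ((\<lambda>\<sigma>. \<alpha> + nsmul i \<sigma>) ` vdist_set v a K)"
    then obtain c where \<delta>: "\<delta> \<in> value_group v K" and "c \<in> K" and le: "\<delta> \<le> \<alpha> + nsmul i (v (a - c))"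
      unfolding downclosure_def vdist_set_def by blast
    have "\<exists>\<^sub>F \<rho> in at_top. v (a - c) \<le> v (s \<rho> - a)"
      using frequently_val_ge_if_divergent[OF s_divergent val_increasing_s_minus_a \<open>c \<in> K\<close>] \<open>c \<in> K\<close> a_notin_K
      by auto
    then have "\<exists>\<^sub>F \<rho> in at_top. v (a - c) \<le> v (s \<rho> - a) \<and>
        y \<rho> - b \<noteq> 0 \<and> v (y \<rho> - b) = \<alpha> + nsmul i (v (a - s \<rho>))"
      using y by (rule frequently_eventually_frequently)
    then obtain \<rho> where "v (a - c) \<le> v (a - s \<rho>)" and "b - y \<rho> \<noteq> 0"
      and "v (b - y \<rho>) = \<alpha> + nsmul i (v (a - s \<rho>))"
      by (auto dest!: frequently_ex simp: v_minus_commute[of _ a] v_minus_commute[of b])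
    moreover have "\<alpha> + nsmul i (v (a - c)) \<le> \<alpha> + nsmul i (v (a - s \<rho>))"
      by (intro add_left_mono nsmul_mono) fact
    ultimately have "\<delta> \<le> v (b - y \<rho>)"
      using le by (metis order_trans)
    then show "\<delta> \<in> vdist_set v b K"
      using vdist_set_downward_closed[OF subfield \<delta>] y_in_K \<open>b - y \<rho> \<noteq> 0\<close> by blast
  qed
qed

end

theorem lemma4p4:
  fixes v :: "'l::field \<Rightarrow> 'g::linordered_ab_group_add"
    and K :: "'l set"
    and s :: "'i::wellorder \<Rightarrow> 'l"
    and a :: 'l
    and P Q :: "'l poly"
  assumes val: "valuation v"
    and subK: "subfield K"
    and imm: "immediate_ext v K"
    and aK: "a \<notin> K"
    and idx: "no_greatest TYPE('i)"
    and sK: "\<forall>\<rho>. s \<rho> \<in> K"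
    and pc: "pseudocauchy v s"
    and tt: "transcendental_type v K s"
    and conv: "pseudoconverges v s a"
    and PK: "poly_over K P" and QK: "poly_over K Q"
    and Qnz: "Q \<noteq> 0" and cop: "coprime P Q"
    and nonconst: "\<not> (\<exists>c. P = smult c Q)"
  shows "poly Q a \<noteq> 0 \<and>
    (\<exists>\<rho>0. \<forall>\<rho>. \<rho>0 < \<rho> \<longrightarrow> poly Q (s \<rho>) \<noteq> 0 \<and> rat_eval P Q (s \<rho>) \<in> K) \<and>
    pseudoconverges v (\<lambda>\<rho>. rat_eval P Q (s \<rho>)) (rat_eval P Q a) \<and>
    (\<exists>\<alpha>\<in>value_group v K. \<exists>i::nat. i \<ge> 1 \<and>
       (\<exists>\<rho>1. \<forall>\<rho>. \<rho>1 < \<rho> \<longrightarrow>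
          vext v (rat_eval P Q (s \<rho>) - rat_eval P Q a) = Some (\<alpha> + nsmul i (v (a - s \<rho>)))) \<and>
       (\<exists>\<rho>2. (\<forall>\<rho>. \<rho>2 < \<rho> \<longrightarrow>
                 \<alpha> + nsmul i (v (a - s \<rho>)) \<in> vdist_set v (rat_eval P Q a) K) \<and>
              (\<forall>\<delta>\<in>vdist_set v (rat_eval P Q a) K. \<exists>\<rho>. \<rho>2 < \<rho> \<and>
                 \<delta> \<le> \<alpha> + nsmul i (v (a - s \<rho>)))) \<and>
       vdist_set v (rat_eval P Q a) K =
         downclosure (value_group v K) ((\<lambda>\<sigma>. \<alpha> + nsmul i \<sigma>) ` vdist_set v a K)) \<and>
    pseudocauchy v (\<lambda>\<rho>. rat_eval P Q (s \<rho>)) \<and>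
    divergent_in v K (\<lambda>\<rho>. rat_eval P Q (s \<rho>))"
proof -
  interpret pseudolimit v K s a
    using val subK idx sK aK conv tt by unfold_locales auto
  define R where "R = rat_eval P Q"
  obtain \<alpha> i where i: "1 \<le> i" and diff: "eventually (\<lambda>\<rho>. R (s \<rho>) - R a \<noteq> 0 \<and>
      v (R (s \<rho>) - R a) = \<alpha> + nsmul i (v (a - s \<rho>))) at_top"
    using rat_eval_diff_value[OF PK QK Qnz nonconst] unfolding R_def by blast
  have div: "divergent_in v K (\<lambda>\<rho>. R (s \<rho>))"
    using rat_eval_divergent[OF PK QK Qnz nonconst] unfolding R_def .
  have R_in_K: "R (s \<rho>) \<in> K" for \<rho>
    unfolding R_def using rat_eval_in_subfield[OF subK PK QK sK[rule_format]] .
  have incr: "val_increasing v (\<lambda>\<rho>. R (s \<rho>) - R a)"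
    using val_increasing_affine[OF _ i diff] val_increasing_a_minus_s
    unfolding val_increasing_def by blast
  have "poly Q a \<noteq> 0" and "eventually (\<lambda>\<rho>. poly Q (s \<rho>) \<noteq> 0) at_top"
    using poly_value_eventually_const[OF QK Qnz] by (auto elim: eventually_mono)
  moreover have "\<alpha> \<in> value_group v K"
    using offset_in_value_group_if_immediate[OF imm diff] .
  moreover have "\<exists>\<rho>2. (\<forall>\<rho>>\<rho>2. \<alpha> + nsmul i (v (a - s \<rho>)) \<in> vdist_set v (R a) K) \<and>
      (\<forall>\<delta>\<in>vdist_set v (R a) K. \<exists>\<rho>>\<rho>2. \<delta> \<le> \<alpha> + nsmul i (v (a - s \<rho>)))"
    using eventually_in_vdist_set[OF R_in_K diff] vdist_set_cofinal[OF div i diff]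
    unfolding eventually_at_top_strict[OF idx] frequently_at_top_strict[OF idx] by blast
  moreover have "vdist_set v (R a) K =
      downclosure (value_group v K) ((\<lambda>\<sigma>. \<alpha> + nsmul i \<sigma>) ` vdist_set v a K)"
    by (rule vdist_set_eq_downclosure[OF imm R_in_K div i diff])
  ultimately show ?thesis
    unfolding R_def[symmetric]
    using i diff R_in_K div pseudoconverges_if_val_increasing[OF incr] pseudocauchy_if_val_increasing[OF incr]
    by (simp add: eventually_at_top_strict[OF idx] vext_def) blast
qed

end
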